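(* Let $F$ be a field, $U,V$ finite-dimensional $F$-vector spaces with $\dim U=n$ and $\dim V=m$, $A:U\times U\to V$ an alternating bilinear map whose image spans $V$, $u_1<\dots<u_n$ an ordered basis of $U$, and $\mathcal{B}$, $W(\mathcal{B})$ as in the context. Let $r,t$ be non-negative integers with $\binom{n}{2}-m=\binom{r}{2}+t$ and $0\le t<r$. Then $W(\mathcal{B})$ contains at least $\binom{n}{3}-\binom{r}{3}-\binom{t}{2}$ linearly independent elements. In particular $\dim\operatorname{Im}\Psi\ge\binom{n}{3}-\binom{r}{3}-\binom{t}{2}$.
   Context: $\mathcal{Y}$ is the set of $2$-element subsets of $\{1,\dots,n\}$, totally ordered by $\{i,j\}<\{r,s\}$ iff $\max\{i,j\}<\max\{r,s\}$, or the maxima are equal to $a$ and the remaining element of $\{i,j\}\setminus\{a\}$ is smaller than that of $\{r,s\}\setminus\{a\}$. $\mathcal{B}$ is constructed as follows: $\mathcal{B}_0=B_0=\emptyset$; inductively let $\{i,j\}$ ($i<j$) be the least element of $\mathcal{Y}$ with $A(u_i,u_j)\notin\operatorname{span}(B_k)$, and set $\mathcal{B}_{k+1}=\mathcal{B}_k\cup\{\{i,j\}\}$, $B_{k+1}=B_k\cup\{A(u_i,u_j)\}$; stop at $k=m$ and put $\mathcal{B}=\mathcal{B}_m$. $\Psi:U\otimes_F U\otimes_F U\to V\otimes_F U$ is the linear map with $\Psi(x\otimes y\otimes z)=A(x,y)\otimes z+A(y,z)\otimes x+A(z,x)\otimes y$. $W(\mathcal{B})$ is the set of elements $\Psi(u_i\otimes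 u_j\otimes u_k)$ with $i<j<k$ such that $\{i,j,k\}$ contains a $2$-element subset belonging to $\mathcal{B}$. Binomial coefficients satisfy $\binom{a}{b}=0$ when $0\le a<b$. *)

theory Defs
  imports Complex_Main "HOL-Library.Product_Lexorder" "HOL-Library.Function_Algebras"
begin

definition Ypairs :: "nat \<Rightarrow> nat set set" where
  "Ypairs n = {S. S \<subseteq> {1..n} \<and> card S = 2}"

text \<open>Total order on Y: compare maxima first, then the remaining (= minimal) element.
  key S < key T (lexicographic order on nat \<times> nat) is exactly the order of the paper.\<close>
definition Ykey :: "nat set \<Rightarrow> nat \<times> nat" where
  "Ykey S = (Max S, Min S)"

definition Aval :: "('u \<Rightarrow> 'u \<Rightarrow> 'v) \<Rightarrow> (nat \<Rightarrow> 'u) \<Rightarrow> nat set \<Rightarrow> 'v" where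
  "Aval A u S = A (u (Min S)) (u (Max S))"

fun Bseq :: "('f::field \<Rightarrow> 'v::ab_group_add \<Rightarrow> 'v) \<Rightarrow> ('u \<Rightarrow> 'u \<Rightarrow> 'v) \<Rightarrow> (nat \<Rightarrow> 'u)
              \<Rightarrow> nat \<Rightarrow> nat \<Rightarrow> nat set set" where
  "Bseq scaleV A u n 0 = {}"
| "Bseq scaleV A u n (Suc k) =
     (let C = {S \<in> Ypairs n. Aval A u S \<notin> module.span scaleV (Aval A u ` Bseq scaleV A u n k)}
      in if C = {} then Bseq scaleV A u n k
         else insert (ARG_MIN Ykey S. S \<in> C) (Bseq scaleV A u n k))"

text \<open>V \<otimes> U is identified with the space of functions nat \<Rightarrow> V (supported on {1..n})
  via the basis u: \<Sum>_l v_l \<otimes> u_l corresponds to (\<lambda>l. v_l).\<close>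
definition scaleVU :: "('f \<Rightarrow> 'v \<Rightarrow> 'v) \<Rightarrow> 'f \<Rightarrow> (nat \<Rightarrow> 'v) \<Rightarrow> (nat \<Rightarrow> 'v)" where
  "scaleVU scaleV c f = (\<lambda>l. scaleV c (f l))"

text \<open>\<Psi>(u_a \<otimes> u_b \<otimes> u_c) = A(u_a,u_b)\<otimes>u_c + A(u_b,u_c)\<otimes>u_a + A(u_c,u_a)\<otimes>u_b,
  under the above identification.\<close>
definition Psi_basis :: "('u \<Rightarrow> 'u \<Rightarrow> 'v::ab_group_add) \<Rightarrow> (nat \<Rightarrow> 'u) \<Rightarrow> nat \<Rightarrow> nat \<Rightarrow> nat \<Rightarrow> (nat \<Rightarrow> 'v)" where
  "Psi_basis A u a b c = (\<lambda>l. (if l = c then A (u a) (u b) else 0)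
                            + (if l = a then A (u b) (u c) else 0)
                            + (if l = b then A (u c) (u a) else 0))"

definition Wset :: "('u \<Rightarrow> 'u \<Rightarrow> 'v::ab_group_add) \<Rightarrow> (nat \<Rightarrow> 'u) \<Rightarrow> nat \<Rightarrow> nat set set \<Rightarrow> (nat \<Rightarrow> 'v) set" where
  "Wset A u n B = {Psi_basis A u i j k | i j k. 1 \<le> i \<and> i < j \<and> j < k \<and> k \<le> n
                      \<and> (\<exists>S\<in>B. S \<subseteq> {i, j, k})}"

definition ImPsi :: "('f::field \<Rightarrow> 'v::ab_group_add \<Rightarrow> 'v) \<Rightarrow> ('u \<Rightarrow> 'u \<Rightarrow> 'v) \<Rightarrow> (nat \<Rightarrow> 'u) \<Rightarrow> nat \<Rightarrow> (nat \<Rightarrow> 'v) set" where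
  "ImPsi scaleV A u n = module.span (scaleVU scaleV)
      {Psi_basis A u a b c | a b c. a \<in> {1..n} \<and> b \<in> {1..n} \<and> c \<in> {1..n}}"

end

theory Submission
  imports Defs
begin

text \<open>Order the pairs as in \<open>\<Y>\<close> and the triples \<open>i < j < k\<close> colexicographically. Each pair
  \<open>P \<in> \<B>\<close> is a pivot of the greedy construction: \<open>A(P)\<close> is not in the span of the \<open>A(Q)\<close>
  with \<open>Q < P\<close>. For a triple containing some \<open>P \<in> \<B>\<close>, let \<open>l\<close> be its remaining index:
  coordinate \<open>l\<close> of \<open>\<Psi>(u\<^sub>i \<otimes> u\<^sub>j \<otimes> u\<^sub>k)\<close> is \<open>\<plusminus>A(P)\<close>, whereas for every
  colexicographically smaller triple it lies in the span of the \<open>A(Q)\<close> with \<open>Q < P\<close>. This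
  triangularity makes the \<open>\<Psi>\<close>-images of these triples linearly independent. All other
  triples are triangles of the graph formed by the \<open>(n choose 2) - m = (r choose 2) + t\<close>
  pairs outside \<open>\<B>\<close>, and a graph with \<open>(r choose 2) + t\<close> edges has at most
  \<open>(r choose 3) + (t choose 2)\<close> triangles, by induction on the number of edges, deleting
  a vertex.\<close>

section \<open>Triangles in graphs with a given number of edges\<close>

lemma choose_2_Suc: "Suc n choose 2 = (n choose 2) + n"
  by (simp add: numeral_2_eq_2)

lemma choose_3_Suc: "Suc n choose 3 = (n choose 3) + (n choose 2)"
  by (simp add: numeral_3_eq_3 numeral_2_eq_2)

lemma choose_2_add: "(a + b) choose 2 = (a choose 2) + (b choose 2) + a * b"
  by (induction b) (auto simp: choose_2_Suc)

lemma choose_2_decomposition: "\<exists>r t. e = (r choose 2) + t \<and> t < r"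
proof (induction e)
  case 0
  show ?case by (rule exI[of _ 1]) auto
next
  case (Suc e)
  then obtain r t where rt: "e = (r choose 2) + t" "t < r" by blast
  show ?case
  proof (cases "Suc t < r")
    case True
    with rt show ?thesis by (intro exI[of _ r] exI[of _ "Suc t"]) auto
  next
    case False
    with rt have "Suc t = r" by simp
    with rt show ?thesis by (intro exI[of _ "Suc r"] exI[of _ 0]) (auto simp: choose_2_Suc)
  qed
qed

lemma choose_2_exchange:
  assumes "a \<le> c" "b \<le> c" "c \<le> a + b"
  shows "(a choose 2) + (b choose 2) \<le> (c choose 2) + ((a + b - c) choose 2)"
proof -
  define w x y where "w = a + b - c" and "x = c - b" and "y = c - a"
  have abc: "a = w + x" "b = w + y" "c = w + x + y"
    using assms unfolding w_def x_def y_def by auto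
  show ?thesis
    unfolding w_def[symmetric] unfolding abc by (simp add: choose_2_add algebra_simps)
qed

lemma le_if_choose_2_le:
  assumes "a choose 2 \<le> (r choose 2) + t" "t < r"
  shows "a \<le> r"
proof (rule ccontr)
  assume "\<not> a \<le> r"
  then have "Suc r choose 2 \<le> a choose 2" by (intro binomial_right_mono) simp
  with assms show False by (simp add: choose_2_Suc)
qed

text \<open>For \<open>e = (r choose 2) + t\<close> with \<open>t < r\<close>, the quantity \<open>(r choose 3) + (t choose 2)\<close>
  counts the triangles of the colex graph with \<open>e\<close> edges: a complete graph on \<open>r\<close> vertices plus
  one vertex joined to \<open>t\<close> of them.\<close>

lemma colex_triangles_mono:
  assumes "(a choose 2) + b \<le> (r choose 2) + t" "b \<le> a" "t < r"
  shows "(a choose 3) + (b choose 2) \<le> (r choose 3) + (t choose 2)"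
proof (cases "a < r")
  case True
  have "(a choose 3) + (b choose 2) \<le> (a choose 3) + (a choose 2)"
    using binomial_right_mono[OF assms(2)] by simp
  also have "\<dots> = Suc a choose 3" by (simp add: choose_3_Suc)
  also have "\<dots> \<le> r choose 3" using True by (intro binomial_right_mono) simp
  finally show ?thesis by simp
next
  case False
  with assms le_if_choose_2_le[of a r t] have "a = r" by simp
  with assms have "b \<le> t" by simp
  with \<open>a = r\<close> show ?thesis using binomial_right_mono[of b t 2] by simp
qed

text \<open>Here \<open>X\<close> bounds the triangles through a vertex of degree \<open>D\<close> in a graph with \<open>e\<close> edges.\<close>

lemma colex_triangles_delete_vertex:
  assumes e: "e = (r choose 2) + t" "t < r" and D: "D \<le> e"
    and e': "e - D = (r' choose 2) + t'" "t' < r'"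
    and X: "X \<le> e - D" "X \<le> D choose 2"
  shows "(r' choose 3) + (t' choose 2) + X \<le> (r choose 3) + (t choose 2)"
proof (cases "D choose 2 \<le> e - D")
  case True
  with e' have "D \<le> r'" by (intro le_if_choose_2_le[of D r' t']) simp_all
  show ?thesis
  proof (cases "t' + D < r'")
    case True
    have "(r' choose 3) + (t' choose 2) + X \<le> (r' choose 3) + ((t' + D) choose 2)"
      using X choose_2_add[of t' D] by simp
    also have "\<dots> \<le> (r choose 3) + (t choose 2)"
      using True e D e' by (intro colex_triangles_mono) auto
    finally show ?thesis .
  next
    case False
    with \<open>D \<le> r'\<close> e'(2) have "(t' choose 2) + (D choose 2) \<le> (r' choose 2) + ((t' + D - r') choose 2)"
      by (intro choose_2_exchange) auto
    with X have "(r' choose 3) + (t' choose 2) + X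
        \<le> (r' choose 3) + (r' choose 2) + ((t' + D - r') choose 2)"
      by simp
    also have "\<dots> = (Suc r' choose 3) + ((t' + D - r') choose 2)" by (simp add: choose_3_Suc)
    also have "\<dots> \<le> (r choose 3) + (t choose 2)"
      using e D e' False \<open>D \<le> r'\<close> by (intro colex_triangles_mono) (auto simp: choose_2_Suc)
    finally show ?thesis .
  qed
next
  case False
  with e' have "r' < D" using binomial_right_mono[of D r' 2] by fastforce
  have "(r' choose 3) + (t' choose 2) + X \<le> (r' choose 3) + (t' choose 2) + ((r' choose 2) + t')"
    using X e' by simp
  also have "\<dots> = (Suc r' choose 3) + (Suc t' choose 2)" by (simp add: choose_3_Suc choose_2_Suc)
  also have "\<dots> \<le> (r choose 3) + (t choose 2)"
    using e D e' \<open>r' < D\<close> by (intro colex_triangles_mono) (auto simp: choose_2_Suc)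
  finally show ?thesis .
qed

definition triangles :: "'a set set \<Rightarrow> 'a set set" where
  "triangles G = {T. card T = 3 \<and> (\<forall>S\<subseteq>T. card S = 2 \<longrightarrow> S \<in> G)}"

lemma finite_Union_doubletons:
  assumes "finite G" "\<forall>S\<in>G. card S = 2"
  shows "finite (\<Union>G)"
  using assms by (metis card.infinite finite_Union zero_neq_numeral)

lemma triangles_empty [simp]: "triangles {} = {}"
proof -
  have False if "card T = 3" "\<forall>S\<subseteq>T. card S = 2 \<longrightarrow> S \<in> {}" for T :: "'a set"
  proof -
    from that(1) obtain x y z where "T = {x, y, z}" "x \<noteq> y" by (auto simp: card_3_iff)
    with that(2)[rule_format, of "{x, y}"] show False by auto
  qed
  then show ?thesis unfolding triangles_def by blast
qed

lemma triangles_subset_Pow_Union: "triangles G \<subseteq> Pow (\<Union>G)"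
proof (intro subsetI PowI)
  fix T x assume "T \<in> triangles G" "x \<in> T"
  then have T: "card T = 3" "\<And>S. S \<subseteq> T \<Longrightarrow> card S = 2 \<Longrightarrow> S \<in> G"
    unfolding triangles_def by auto
  from T(1) \<open>x \<in> T\<close> have "card (T - {x}) = 2" by simp
  then obtain y where "y \<in> T - {x}" by (metis all_not_in_conv card.empty zero_neq_numeral)
  with \<open>x \<in> T\<close> have "{x, y} \<in> G" by (intro T(2)) auto
  then show "x \<in> \<Union>G" by blast
qed

lemma finite_triangles:
  assumes "finite G" "\<forall>S\<in>G. card S = 2"
  shows "finite (triangles G)"
proof -
  have "finite (\<Union>G)"
    using assms by (rule finite_Union_doubletons)
  then show ?thesis
    by (meson finite_Pow_iff finite_subset triangles_subset_Pow_Union)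
qed

lemma card_triangles_le_delete_vertex:
  assumes "finite G" "\<forall>S\<in>G. card S = 2"
  shows "card (triangles G) \<le> card (triangles {S\<in>G. v \<notin> S}) + card {T\<in>triangles G. v \<in> T}"
proof -
  have "triangles G \<subseteq> triangles {S\<in>G. v \<notin> S} \<union> {T\<in>triangles G. v \<in> T}"
    unfolding triangles_def by blast
  moreover have "finite (triangles {S\<in>G. v \<notin> S})"
    using assms by (intro finite_triangles) auto
  ultimately have "card (triangles G) \<le> card (triangles {S\<in>G. v \<notin> S} \<union> {T\<in>triangles G. v \<in> T})"
    using finite_triangles[OF assms] by (intro card_mono) auto
  also have "\<dots> \<le> card (triangles {S\<in>G. v \<notin> S}) + card {T\<in>triangles G. v \<in> T}"
    by (rule card_Un_le)
  finally show ?thesis .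
qed

lemma card_triangles_through_vertex:
  assumes "finite G" "\<forall>S\<in>G. card S = 2"
  shows "card {T\<in>triangles G. v \<in> T} \<le> card {S\<in>G. v \<notin> S}"
    and "card {T\<in>triangles G. v \<in> T} \<le> card {S\<in>G. v \<in> S} choose 2"
proof -
  define Tv where "Tv = {T\<in>triangles G. v \<in> T}"
  define N where "N = {w. {v, w} \<in> G}"
  have inj: "inj_on (\<lambda>T. T - {v}) Tv"
    unfolding Tv_def by (intro inj_onI) (metis (no_types, lifting) insert_Diff mem_Collect_eq)
  have opposite: "T - {v} \<in> G" "v \<notin> T - {v}" "card (T - {v}) = 2" "T - {v} \<subseteq> N"
    if "T \<in> Tv" for T
  proof -
    from that have T: "card T = 3" "v \<in> T" "\<And>S. S \<subseteq> T \<Longrightarrow> card S = 2 \<Longrightarrow> S \<in> G"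
      unfolding Tv_def triangles_def by auto
    then show "T - {v} \<in> G" "v \<notin> T - {v}" "card (T - {v}) = 2" by auto
    show "T - {v} \<subseteq> N"
    proof
      fix w assume "w \<in> T - {v}"
      with T have "{v, w} \<subseteq> T" "card {v, w} = 2" by auto
      with T(3) show "w \<in> N" unfolding N_def by blast
    qed
  qed
  have "finite {S\<in>G. v \<notin> S}" using assms(1) by simp
  with inj opposite show "card Tv \<le> card {S\<in>G. v \<notin> S}"
    by (intro card_inj_on_le) auto
  have "N \<subseteq> \<Union>G" unfolding N_def by auto
  moreover have "finite (\<Union>G)" using assms by (rule finite_Union_doubletons)
  ultimately have finN: "finite N" by (rule finite_subset)
  have "inj_on (\<lambda>w. {v, w}) N"
    by (auto simp: inj_on_def doubleton_eq_iff)
  moreover have "(\<lambda>w. {v, w}) ` N \<subseteq> {S\<in>G. v \<in> S}" unfolding N_def by auto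
  ultimately have "card N \<le> card {S\<in>G. v \<in> S}"
    using assms(1) by (intro card_inj_on_le) auto
  have "card Tv \<le> card {S. S \<subseteq> N \<and> card S = 2}"
    using finN inj opposite by (intro card_inj_on_le) auto
  also have "\<dots> = card N choose 2" by (rule n_subsets[OF finN])
  also have "\<dots> \<le> card {S\<in>G. v \<in> S} choose 2"
    by (rule binomial_right_mono) fact
  finally show "card Tv \<le> card {S\<in>G. v \<in> S} choose 2" .
qed

lemma card_triangles_le:
  assumes "finite G" "\<forall>S\<in>G. card S = 2" "card G = (r choose 2) + t" "t < r"
  shows "card (triangles G) \<le> (r choose 3) + (t choose 2)"
  using assms
proof (induction "card G" arbitrary: G r t rule: less_induct)
  case less
  show ?case
  proof (cases "G = {}")
    case False
    then obtain S v where "S \<in> G" "v \<in> S"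
      using less.prems(2) by (metis card_2_iff' ex_in_conv)
    define G' where "G' = {S\<in>G. v \<notin> S}"
    define D where "D = card {S\<in>G. v \<in> S}"
    have "G = G' \<union> {S\<in>G. v \<in> S}" "G' \<inter> {S\<in>G. v \<in> S} = {}" unfolding G'_def by auto
    then have "card G = card G' + D"
      unfolding D_def using less.prems(1) by (metis card_Un_disjoint finite_Un)
    moreover have "D > 0"
      unfolding D_def using less.prems(1) \<open>S \<in> G\<close> \<open>v \<in> S\<close> by (auto simp: card_gt_0_iff)
    moreover obtain r' t' where rt': "card G' = (r' choose 2) + t'" "t' < r'"
      using choose_2_decomposition by blast
    ultimately have IH: "card (triangles G') \<le> (r' choose 3) + (t' choose 2)"
      using less.prems by (intro less.hyps) (auto simp: G'_def)
    have "(r' choose 3) + (t' choose 2) + card {T\<in>triangles G. v \<in> T} \<le> (r choose 3) + (t choose 2)"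
    proof (rule colex_triangles_delete_vertex[of "card G" r t D r' t'])
      show "card {T\<in>triangles G. v \<in> T} \<le> card G - D"
        using card_triangles_through_vertex(1)[OF less.prems(1,2), of v] \<open>card G = card G' + D\<close>
        by (simp add: G'_def)
      show "card {T\<in>triangles G. v \<in> T} \<le> D choose 2"
        using card_triangles_through_vertex(2)[OF less.prems(1,2), of v] by (simp add: D_def)
    qed (use less.prems(3,4) rt' \<open>card G = card G' + D\<close> in simp_all)
    moreover have "card (triangles G) \<le> card (triangles G') + card {T\<in>triangles G. v \<in> T}"
      unfolding G'_def by (rule card_triangles_le_delete_vertex[OF less.prems(1,2)])
    ultimately show ?thesis using IH by linarith
  qed simp
qed

section \<open>Triples containing a pair of \<open>\<B>\<close>\<close>

lemma card_3_obtain_sorted: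
  fixes T :: "'a::linorder set"
  assumes "card T = 3"
  obtains i j k where "i < j" "j < k" "T = {i, j, k}"
proof -
  define xs where "xs = sorted_list_of_set T"
  have "finite T" using assms by (simp add: card_ge_0_finite)
  then have "sorted_wrt (<) xs" "set xs = T" "length xs = 3"
    using assms by (simp_all add: xs_def)
  moreover from \<open>length xs = 3\<close> obtain i j k where "xs = [i, j, k]"
    by (auto simp: numeral_3_eq_3 length_Suc_conv)
  ultimately show ?thesis using that by auto
qed

lemma finite_Ypairs: "finite (Ypairs n)"
  by (rule finite_subset[of _ "Pow {1..n}"]) (auto simp: Ypairs_def)

lemma card_Ypairs: "card (Ypairs n) = n choose 2"
  using n_subsets[of "{1..n}" 2] by (simp add: Ypairs_def)

definition covered_triples :: "nat \<Rightarrow> nat set set \<Rightarrow> (nat \<times> nat \<times> nat) set" where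
  "covered_triples n B =
     {(i, j, k). 1 \<le> i \<and> i < j \<and> j < k \<and> k \<le> n \<and> (\<exists>S\<in>B. S \<subseteq> {i, j, k})}"

lemma finite_covered_triples: "finite (covered_triples n B)"
  by (rule finite_subset[of _ "{1..n} \<times> {1..n} \<times> {1..n}"]) (auto simp: covered_triples_def)

text \<open>A 3-subset of \<open>{1..n}\<close> either contains a pair of \<open>B\<close> or is a triangle of the complement.\<close>

lemma binomial_3_le_covered_triples_triangles:
  assumes "B \<subseteq> Ypairs n"
  shows "n choose 3 \<le> card (covered_triples n B) + card (triangles (Ypairs n - B))"
proof -
  let ?G = "Ypairs n - B"
  have "{T. T \<subseteq> {1..n} \<and> card T = 3}
      \<subseteq> (\<lambda>(i, j, k). {i, j, k}) ` covered_triples n B \<union> triangles ?G"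
  proof
    fix T assume "T \<in> {T. T \<subseteq> {1..n} \<and> card T = 3}"
    then have T: "T \<subseteq> {1..n}" "card T = 3" by auto
    then obtain i j k where ijk: "i < j" "j < k" "T = {i, j, k}"
      using card_3_obtain_sorted by blast
    show "T \<in> (\<lambda>(i, j, k). {i, j, k}) ` covered_triples n B \<union> triangles ?G"
    proof (cases "\<exists>S\<in>B. S \<subseteq> T")
      case True
      with T ijk have "(i, j, k) \<in> covered_triples n B"
        unfolding covered_triples_def by auto
      with ijk show ?thesis by (auto intro: rev_image_eqI[of "(i, j, k)"])
    next
      case False
      have "S \<in> ?G" if "S \<subseteq> T" "card S = 2" for S
        using that T False unfolding Ypairs_def by auto
      with T have "T \<in> triangles ?G"
        unfolding triangles_def by auto
      then show ?thesis by blast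
    qed
  qed
  moreover have "finite (triangles ?G)"
    using finite_Ypairs by (intro finite_triangles) (auto simp: Ypairs_def)
  ultimately have "card {T. T \<subseteq> {1..n} \<and> card T = 3}
      \<le> card ((\<lambda>(i, j, k). {i, j, k}) ` covered_triples n B \<union> triangles ?G)"
    using finite_covered_triples by (intro card_mono) auto
  also have "\<dots> \<le> card (covered_triples n B) + card (triangles ?G)"
    by (meson add_right_mono card_Un_le card_image_le finite_covered_triples le_trans)
  finally show ?thesis by (simp add: n_subsets)
qed

section \<open>The greedy pivot pairs\<close>

lemma Bseq_Suc_cases:
  fixes scale :: "'f::field \<Rightarrow> 'v::ab_group_add \<Rightarrow> 'v"
  obtains (saturated) "Bseq scale A u n (Suc k) = Bseq scale A u n k"
      "Aval A u ` Ypairs n \<subseteq> module.span scale (Aval A u ` Bseq scale A u n k)"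
  | (extended) P where "Bseq scale A u n (Suc k) = insert P (Bseq scale A u n k)" "P \<in> Ypairs n"
      "Aval A u P \<notin> module.span scale (Aval A u ` Bseq scale A u n k)"
      "\<And>Q. Q \<in> Ypairs n \<Longrightarrow> Ykey Q < Ykey P
         \<Longrightarrow> Aval A u Q \<in> module.span scale (Aval A u ` Bseq scale A u n k)"
proof -
  define C where
    "C = {S \<in> Ypairs n. Aval A u S \<notin> module.span scale (Aval A u ` Bseq scale A u n k)}"
  have step: "Bseq scale A u n (Suc k)
      = (if C = {} then Bseq scale A u n k else insert (arg_min_on Ykey C) (Bseq scale A u n k))"
    by (simp only: Bseq.simps Let_def C_def arg_min_on_def)
  show ?thesis
  proof (cases "C = {}")
    case True
    with step show ?thesis by (intro saturated) (auto simp: C_def)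
  next
    case False
    have "finite C" using finite_Ypairs by (simp add: C_def)
    then have "arg_min_on Ykey C \<in> C" "\<not> (\<exists>Q\<in>C. Ykey Q < Ykey (arg_min_on Ykey C))"
      using False by (rule arg_min_if_finite)+
    with False step show ?thesis by (intro extended[of "arg_min_on Ykey C"]) (auto simp: C_def)
  qed
qed

declare Bseq.simps(2) [simp del]

lemma Bseq_subset_Ypairs: "Bseq scale A u n k \<subseteq> Ypairs n"
proof (induction k)
  case (Suc k)
  then show ?case by (cases rule: Bseq_Suc_cases[of scale A u n k]) auto
qed simp

context vector_space
begin

lemma Bseq_pivot:
  assumes "P \<in> Bseq scale A u n k"
  shows "Aval A u P \<notin> span (Aval A u ` {Q \<in> Ypairs n. Ykey Q < Ykey P})"
  using assms
proof (induction k)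
  case (Suc k)
  show ?case
  proof (cases rule: Bseq_Suc_cases[of scale A u n k])
    case saturated
    with Suc.prems have "P \<in> Bseq scale A u n k" by simp
    then show ?thesis by (rule Suc.IH)
  next
    case (extended P')
    show ?thesis
    proof (cases "P = P'")
      case True
      have "span (Aval A u ` {Q \<in> Ypairs n. Ykey Q < Ykey P}) \<subseteq> span (Aval A u ` Bseq scale A u n k)"
        using extended(4) True by (intro span_minimal) auto
      with extended(3) True show ?thesis by blast
    next
      case False
      with Suc.prems extended(1) have "P \<in> Bseq scale A u n k" by simp
      then show ?thesis by (rule Suc.IH)
    qed
  qed
qed simp

lemma card_Bseq:
  assumes "span (Aval A u ` Ypairs n) = UNIV" "k \<le> dim (UNIV :: 'b set)"
  shows "card (Bseq scale A u n k) = k"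
  using assms(2)
proof (induction k)
  case (Suc k)
  then have IH: "card (Bseq scale A u n k) = k" by linarith
  have fin: "finite (Bseq scale A u n k)"
    using Bseq_subset_Ypairs finite_Ypairs by (rule finite_subset)
  show ?case
  proof (cases rule: Bseq_Suc_cases[of scale A u n k])
    case saturated
    have "UNIV \<subseteq> span (Aval A u ` Bseq scale A u n k)"
      using span_minimal[OF saturated(2) subspace_span] assms(1) by simp
    then have "dim (UNIV :: 'b set) \<le> card (Aval A u ` Bseq scale A u n k)"
      using fin by (intro dim_le_card) simp_all
    also have "\<dots> \<le> k" using card_image_le[OF fin] IH by simp
    finally show ?thesis using Suc.prems by simp
  next
    case (extended P)
    have "P \<notin> Bseq scale A u n k"
      using extended(3) span_base[of "Aval A u P" "Aval A u ` Bseq scale A u n k"] by auto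
    with extended(1) fin IH show ?thesis by simp
  qed
qed simp

end

section \<open>Triangular families of vectors\<close>

lemma vector_space_scaleVU:
  assumes "vector_space scaleV"
  shows "vector_space (scaleVU scaleV)"
proof -
  interpret vector_space scaleV by fact
  show ?thesis
    by unfold_locales (simp_all add: scaleVU_def fun_eq_iff scale_right_distrib scale_left_distrib)
qed

lemma linear_scaleVU_apply:
  assumes "vector_space scaleV"
  shows "Vector_Spaces.linear (scaleVU scaleV) scaleV (\<lambda>g. g l)"
  using assms vector_space_scaleVU[OF assms]
  by (simp add: Vector_Spaces.linear_def module_hom_axioms_def module_hom_def
      module_iff_vector_space scaleVU_def)

lemma (in vector_space) independent_image_if_coeffs_vanish:
  assumes "finite T" and vanish: "\<And>c. (\<Sum>x\<in>T. c x *s f x) = 0 \<Longrightarrow> \<forall>x\<in>T. c x = 0"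
  shows "inj_on f T" and "independent (f ` T)"
proof -
  show "inj_on f T"
  proof (rule inj_onI, rule ccontr)
    fix x y assume "x \<in> T" "y \<in> T" "f x = f y" "x \<noteq> y"
    define c where "c z = (if z = x then 1 else if z = y then - 1 else 0 :: 'a)" for z
    have "(\<Sum>z\<in>T. c z *s f z) = (\<Sum>z\<in>{x, y}. c z *s f z)"
      using \<open>finite T\<close> \<open>x \<in> T\<close> \<open>y \<in> T\<close> by (intro sum.mono_neutral_right) (auto simp: c_def)
    also have "\<dots> = 0"
      using \<open>f x = f y\<close> \<open>x \<noteq> y\<close> by (simp add: c_def)
    finally have "c x = 0" using vanish \<open>x \<in> T\<close> by blast
    then show False by (simp add: c_def)
  qed
  show "independent (f ` T)"
  proof
    assume "dependent (f ` T)"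
    then obtain c where c: "\<exists>v\<in>f ` T. c v \<noteq> 0" "(\<Sum>v\<in>f ` T. c v *s v) = 0"
      using \<open>finite T\<close> by (auto simp: dependent_finite)
    have "(\<Sum>x\<in>T. c (f x) *s f x) = 0"
      using c(2) by (simp add: sum.reindex[OF \<open>inj_on f T\<close>])
    then have "\<forall>x\<in>T. c (f x) = 0" by (rule vanish)
    with c(1) show False by auto
  qed
qed

lemma (in vector_space) independent_card_le_dim_span:
  assumes "finite G" "S \<subseteq> span G" "independent S"
  shows "card S \<le> dim (span G)"
proof -
  obtain B where "S \<subseteq> B" "B \<subseteq> span G" "independent B" "span G \<subseteq> span B"
    using assms(2,3) by (rule maximal_independent_subset_extend)
  moreover from this have "finite B" using independent_span_bound[OF assms(1)] by blast
  ultimately show ?thesis using basis_card_eq_dim card_mono by metis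
qed

text \<open>A family is independent as soon as every member has a linear functional and a subspace
  that separate it from all members of smaller key: in a vanishing combination, apply the
  functional belonging to the nonzero coefficient of largest key.\<close>

lemma triangular_coeffs_vanish:
  fixes scaleW :: "'a::field \<Rightarrow> 'w::ab_group_add \<Rightarrow> 'w" and scaleV :: "'a \<Rightarrow> 'v::ab_group_add \<Rightarrow> 'v"
    and key :: "'i \<Rightarrow> 'k::linorder"
  assumes "finite T" "inj_on key T"
    and separate: "\<And>\<tau>. \<tau> \<in> T \<Longrightarrow> \<exists>\<phi> S. Vector_Spaces.linear scaleW scaleV \<phi> \<and> module.subspace scaleV S
        \<and> \<phi> (f \<tau>) \<notin> S \<and> (\<forall>\<sigma>\<in>T. key \<sigma> < key \<tau> \<longrightarrow> \<phi> (f \<sigma>) \<in> S)"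
    and sum_eq_0: "(\<Sum>\<sigma>\<in>T. scaleW (c \<sigma>) (f \<sigma>)) = 0"
  shows "\<forall>\<sigma>\<in>T. c \<sigma> = 0"
proof (rule ccontr)
  assume "\<not> (\<forall>\<sigma>\<in>T. c \<sigma> = 0)"
  define Z where "Z = {\<sigma>\<in>T. c \<sigma> \<noteq> 0}"
  have "finite Z" "Z \<noteq> {}"
    using \<open>finite T\<close> \<open>\<not> (\<forall>\<sigma>\<in>T. c \<sigma> = 0)\<close> by (auto simp: Z_def)
  then obtain \<tau> where "\<tau> \<in> Z" and \<tau>_max: "key \<tau> = Max (key ` Z)"
    by (metis (mono_tags, lifting) Max_in finite_imageI image_iff image_is_empty)
  then have "\<tau> \<in> T" "c \<tau> \<noteq> 0" by (auto simp: Z_def)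
  have below: "key \<sigma> < key \<tau>" if "\<sigma> \<in> T - {\<tau>}" "c \<sigma> \<noteq> 0" for \<sigma>
  proof -
    have "key \<sigma> \<le> key \<tau>" using that \<open>finite Z\<close> \<tau>_max by (auto simp: Z_def)
    moreover have "key \<sigma> \<noteq> key \<tau>" using that \<open>\<tau> \<in> T\<close> \<open>inj_on key T\<close> by (auto dest: inj_onD)
    ultimately show ?thesis by simp
  qed
  obtain \<phi> S where "Vector_Spaces.linear scaleW scaleV \<phi>" "module.subspace scaleV S" "\<phi> (f \<tau>) \<notin> S"
    and lower: "\<And>\<sigma>. \<sigma> \<in> T \<Longrightarrow> key \<sigma> < key \<tau> \<Longrightarrow> \<phi> (f \<sigma>) \<in> S"
    using separate[OF \<open>\<tau> \<in> T\<close>] by blast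
  interpret \<phi>: Vector_Spaces.linear scaleW scaleV \<phi> by fact
  have "scaleV (c \<tau>) (\<phi> (f \<tau>)) + (\<Sum>\<sigma>\<in>T - {\<tau>}. scaleV (c \<sigma>) (\<phi> (f \<sigma>))) = 0"
    using arg_cong[OF sum_eq_0, of \<phi>] \<open>finite T\<close> \<open>\<tau> \<in> T\<close>
    by (simp add: \<phi>.add \<phi>.sum \<phi>.scale sum.remove)
  moreover have "(\<Sum>\<sigma>\<in>T - {\<tau>}. scaleV (c \<sigma>) (\<phi> (f \<sigma>))) \<in> S"
  proof (intro \<phi>.vs2.subspace_sum)
    fix \<sigma> assume "\<sigma> \<in> T - {\<tau>}"
    with below lower \<open>module.subspace scaleV S\<close> show "scaleV (c \<sigma>) (\<phi> (f \<sigma>)) \<in> S"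
      by (cases "c \<sigma> = 0") (auto intro: \<phi>.vs2.subspace_scale \<phi>.vs2.subspace_0)
  qed fact
  ultimately have "scaleV (c \<tau>) (\<phi> (f \<tau>)) \<in> S"
    using \<open>module.subspace scaleV S\<close> by (metis \<phi>.vs2.subspace_neg add_eq_0_iff minus_minus)
  then have "scaleV (inverse (c \<tau>)) (scaleV (c \<tau>) (\<phi> (f \<tau>))) \<in> S"
    using \<open>module.subspace scaleV S\<close> by (rule \<phi>.vs2.subspace_scale[rotated])
  with \<open>c \<tau> \<noteq> 0\<close> \<open>\<phi> (f \<tau>) \<notin> S\<close> show False by simp
qed

section \<open>Alternating bilinear maps and \<open>\<Psi>\<close>\<close>

lemma Aval_doubleton: "x < y \<Longrightarrow> Aval A u {x, y} = A (u x) (u y)"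
  by (simp add: Aval_def)

lemma Ykey_doubleton: "x < y \<Longrightarrow> Ykey {x, y} = (y, x)"
  by (simp add: Ykey_def)

lemma doubleton_in_Ypairs: "1 \<le> x \<Longrightarrow> x < y \<Longrightarrow> y \<le> n \<Longrightarrow> {x, y} \<in> Ypairs n"
  by (simp add: Ypairs_def)

lemma Ykey_Diff_singleton_less:
  fixes a b d i j k l :: nat
  assumes "a < b" "b < d" "i < j" "j < k" "(d, b, a) < (k, j, i)" "l \<in> {a, b, d}" "l \<in> {i, j, k}"
  shows "Ykey ({a, b, d} - {l}) < Ykey ({i, j, k} - {l})"
proof -
  have rem: "{x, y, z} - {l} = (if l = x then {y, z} else if l = y then {x, z} else {x, y})"
    if "x < y" "y < z" "l \<in> {x, y, z}" for x y z :: nat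
    using that by auto
  show ?thesis
    using assms by (auto simp: rem Ykey_doubleton)
qed

lemma card_Suc_subset_eq_Diff_singleton:
  assumes "P \<subseteq> T" "finite T" "Suc (card P) = card T"
  obtains l where "l \<in> T" "P = T - {l}"
proof -
  have "card (T - P) = 1"
    using assms by (simp add: card_Diff_subset finite_subset)
  then obtain l where "T - P = {l}" by (rule card_1_singletonE)
  with assms(1) show ?thesis by (intro that[of l]) auto
qed

definition Psi_triple ::
    "('u \<Rightarrow> 'u \<Rightarrow> 'v::ab_group_add) \<Rightarrow> (nat \<Rightarrow> 'u) \<Rightarrow> nat \<times> nat \<times> nat \<Rightarrow> nat \<Rightarrow> 'v" where
  "Psi_triple A u = (\<lambda>(i, j, k). Psi_basis A u i j k)"

lemma Wset_eq_image_covered_triples: "Wset A u n B = Psi_triple A u ` covered_triples n B"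
proof -
  have "Wset A u n B = (\<lambda>(i, j, k). Psi_basis A u i j k) ` covered_triples n B"
    unfolding Wset_def covered_triples_def by (auto simp: image_def)
  then show ?thesis by (simp add: Psi_triple_def)
qed

locale alternating_bilinear =
  U: vector_space scaleU + V: vector_space scaleV
  for scaleU :: "'f::field \<Rightarrow> 'u::ab_group_add \<Rightarrow> 'u" and scaleV :: "'f \<Rightarrow> 'v::ab_group_add \<Rightarrow> 'v" +
  fixes A :: "'u \<Rightarrow> 'u \<Rightarrow> 'v"
  assumes linear_right: "\<And>x. Vector_Spaces.linear scaleU scaleV (A x)"
    and linear_left: "\<And>y. Vector_Spaces.linear scaleU scaleV (\<lambda>x. A x y)"
    and alternating: "\<And>x. A x x = 0"
begin

sublocale W: vector_space "scaleVU scaleV"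
  by (rule vector_space_scaleVU) unfold_locales

lemma module_hom_right: "module_hom scaleU scaleV (A x)"
  using linear_right by (simp add: linear_iff_module_hom)

lemma module_hom_left: "module_hom scaleU scaleV (\<lambda>x. A x y)"
  using linear_left by (simp add: linear_iff_module_hom)

lemma skew_symmetric: "A y x = - A x y"
proof -
  have "0 = A (x + y) (x + y)" by (simp add: alternating)
  also have "\<dots> = A x x + A y x + (A x y + A y y)"
    by (simp add: module_hom.add[OF module_hom_left] module_hom.add[OF module_hom_right])
  finally show ?thesis by (simp add: alternating eq_neg_iff_add_eq_0 add.commute)
qed

lemma in_span_of_generators:
  assumes "U.span G = UNIV"
  shows "A x y \<in> V.span (case_prod A ` (G \<times> G))"
proof -
  have "A x h \<in> V.span (case_prod A ` (G \<times> G))" if "h \<in> G" for h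
  proof -
    have "A x h \<in> (\<lambda>x. A x h) ` U.span G" using assms by simp
    also have "\<dots> = V.span ((\<lambda>x. A x h) ` G)"
      by (rule module_hom.span_image[OF module_hom_left[of h], symmetric])
    also have "\<dots> \<subseteq> V.span (case_prod A ` (G \<times> G))" using that by (intro V.span_mono) auto
    finally show ?thesis .
  qed
  then have "V.span (A x ` G) \<subseteq> V.span (case_prod A ` (G \<times> G))"
    by (intro V.span_minimal) auto
  moreover have "A x y \<in> V.span (A x ` G)"
    using assms module_hom.span_image[OF module_hom_right[of x], of G] by simp
  ultimately show ?thesis by blast
qed

lemma span_Aval_Ypairs:
  assumes "U.span (u ` {1..n}) = UNIV"
  shows "V.span (Aval A u ` Ypairs n) = V.span {A x y | x y. True}"
proof
  show "V.span (Aval A u ` Ypairs n) \<subseteq> V.span {A x y | x y. True}"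
    by (intro V.span_mono) (auto simp: Aval_def)
  have "A (u i) (u j) \<in> V.span (Aval A u ` Ypairs n)" if "i \<in> {1..n}" "j \<in> {1..n}" for i j
  proof (cases i j rule: linorder_cases)
    case less
    with that have "A (u i) (u j) \<in> Aval A u ` Ypairs n"
      by (auto simp: Aval_doubleton intro!: image_eqI[of _ _ "{i, j}"] doubleton_in_Ypairs)
    then show ?thesis by (rule V.span_base)
  next
    case equal
    then show ?thesis by (simp add: alternating V.span_zero)
  next
    case greater
    with that have "A (u j) (u i) \<in> Aval A u ` Ypairs n"
      by (auto simp: Aval_doubleton intro!: image_eqI[of _ _ "{j, i}"] doubleton_in_Ypairs)
    then show ?thesis by (subst skew_symmetric) (intro V.span_neg V.span_base)
  qed
  then have "case_prod A ` (u ` {1..n} \<times> u ` {1..n}) \<subseteq> V.span (Aval A u ` Ypairs n)"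
    by auto
  then have "V.span (case_prod A ` (u ` {1..n} \<times> u ` {1..n})) \<subseteq> V.span (Aval A u ` Ypairs n)"
    by (intro V.span_minimal) auto
  with in_span_of_generators[OF assms] show "V.span {A x y | x y. True} \<subseteq> V.span (Aval A u ` Ypairs n)"
    by (intro V.span_minimal) auto
qed

lemma Wset_subset_ImPsi: "Wset A u n B \<subseteq> ImPsi scaleV A u n"
proof
  fix x assume "x \<in> Wset A u n B"
  then obtain i j k where "x = Psi_basis A u i j k" "i \<in> {1..n}" "j \<in> {1..n}" "k \<in> {1..n}"
    unfolding Wset_def by auto
  then show "x \<in> ImPsi scaleV A u n"
    unfolding ImPsi_def by (blast intro: W.span_base)
qed

lemma independent_card_le_dim_ImPsi:
  assumes "S \<subseteq> ImPsi scaleV A u n" "W.independent S"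
  shows "card S \<le> W.dim (ImPsi scaleV A u n)"
proof -
  have "{Psi_basis A u a b c | a b c. a \<in> {1..n} \<and> b \<in> {1..n} \<and> c \<in> {1..n}}
      \<subseteq> (\<lambda>(a, b, c). Psi_basis A u a b c) ` ({1..n} \<times> {1..n} \<times> {1..n})"
    by force
  then have "finite {Psi_basis A u a b c | a b c. a \<in> {1..n} \<and> b \<in> {1..n} \<and> c \<in> {1..n}}"
    by (rule finite_subset) simp
  with assms show ?thesis
    unfolding ImPsi_def by (intro W.independent_card_le_dim_span)
qed

lemma Psi_basis_eq_0_outside: "l \<notin> {a, b, d} \<Longrightarrow> Psi_basis A u a b d l = 0"
  by (auto simp: Psi_basis_def)

lemma Psi_basis_at_vertex:
  assumes "a < b" "b < d" "l \<in> {a, b, d}"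
  shows "Psi_basis A u a b d l \<in> {Aval A u ({a, b, d} - {l}), - Aval A u ({a, b, d} - {l})}"
proof -
  have "{a, b, d} - {a} = {b, d}" "{a, b, d} - {b} = {a, d}" "{a, b, d} - {d} = {a, b}"
    using assms(1,2) by auto
  with assms show ?thesis
    by (auto simp: Psi_basis_def Aval_doubleton intro: skew_symmetric)
qed

lemma Psi_basis_in_span_below:
  assumes "1 \<le> a" "a < b" "b < d" "d \<le> n" "i < j" "j < k" "(d, b, a) < (k, j, i)" "l \<in> {i, j, k}"
  shows "Psi_basis A u a b d l \<in> V.span (Aval A u ` {Q \<in> Ypairs n. Ykey Q < Ykey ({i, j, k} - {l})})"
proof (cases "l \<in> {a, b, d}")
  case True
  have "{a, b, d} - {l} \<in> Ypairs n"
    using assms(1-4) True by (auto simp: Ypairs_def)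
  moreover have "Ykey ({a, b, d} - {l}) < Ykey ({i, j, k} - {l})"
    using assms(2,3,5-7) True assms(8) by (rule Ykey_Diff_singleton_less)
  ultimately have "Aval A u ({a, b, d} - {l})
      \<in> V.span (Aval A u ` {Q \<in> Ypairs n. Ykey Q < Ykey ({i, j, k} - {l})})"
    by (intro V.span_base) auto
  with Psi_basis_at_vertex[OF assms(2,3) True, where u = u] show ?thesis
    by (auto intro: V.span_neg)
next
  case False
  then show ?thesis by (simp add: Psi_basis_eq_0_outside V.span_zero)
qed

lemma Psi_covered_triples_independent:
  assumes "B \<subseteq> Ypairs n"
    and pivot: "\<And>P. P \<in> B \<Longrightarrow> Aval A u P \<notin> V.span (Aval A u ` {Q \<in> Ypairs n. Ykey Q < Ykey P})"
  shows "inj_on (Psi_triple A u) (covered_triples n B)"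
    and "W.independent (Psi_triple A u ` covered_triples n B)"
proof -
  let ?key = "\<lambda>(i, j, k). (k, j, i) :: nat \<times> nat \<times> nat"
  have "\<forall>\<tau>\<in>covered_triples n B. c \<tau> = 0"
    if "(\<Sum>\<tau>\<in>covered_triples n B. scaleVU scaleV (c \<tau>) (Psi_triple A u \<tau>)) = 0" for c
  proof (rule triangular_coeffs_vanish[where scaleW = "scaleVU scaleV" and scaleV = scaleV
        and f = "Psi_triple A u" and key = ?key])
    show "finite (covered_triples n B)" by (rule finite_covered_triples)
    show "inj_on ?key (covered_triples n B)" by (auto simp: inj_on_def)
    show "(\<Sum>\<tau>\<in>covered_triples n B. scaleVU scaleV (c \<tau>) (Psi_triple A u \<tau>)) = 0" by fact
    fix \<tau> assume "\<tau> \<in> covered_triples n B"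
    then obtain i j k P where \<tau>: "\<tau> = (i, j, k)" "1 \<le> i" "i < j" "j < k" "k \<le> n"
      and "P \<in> B" "P \<subseteq> {i, j, k}"
      unfolding covered_triples_def by auto
    moreover from \<open>P \<in> B\<close> assms(1) have "card P = 2" by (auto simp: Ypairs_def)
    ultimately obtain l where l: "l \<in> {i, j, k}" "P = {i, j, k} - {l}"
      by (elim card_Suc_subset_eq_Diff_singleton) auto
    let ?S = "V.span (Aval A u ` {Q \<in> Ypairs n. Ykey Q < Ykey P})"
    have "Psi_triple A u \<tau> l \<in> {Aval A u P, - Aval A u P}"
      using Psi_basis_at_vertex[OF \<tau>(3,4) l(1), where u = u] by (simp add: \<tau>(1) Psi_triple_def l(2))
    then have "Psi_triple A u \<tau> l \<notin> ?S"
      using pivot[OF \<open>P \<in> B\<close>] by (auto dest: V.span_neg)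
    moreover have "Psi_triple A u \<sigma> l \<in> ?S"
      if "\<sigma> \<in> covered_triples n B" "?key \<sigma> < ?key \<tau>" for \<sigma>
      using that \<tau> l Psi_basis_in_span_below[of _ _ _ n i j k l]
      by (auto simp: covered_triples_def Psi_triple_def)
    ultimately show "\<exists>\<phi> S. Vector_Spaces.linear (scaleVU scaleV) scaleV \<phi> \<and> V.subspace S
        \<and> \<phi> (Psi_triple A u \<tau>) \<notin> S
        \<and> (\<forall>\<sigma>\<in>covered_triples n B. ?key \<sigma> < ?key \<tau> \<longrightarrow> \<phi> (Psi_triple A u \<sigma>) \<in> S)"
      using linear_scaleVU_apply[OF V.vector_space_axioms, of l]
      by (intro exI[of _ "\<lambda>g. g l"] exI[of _ ?S]) auto
  qed
  then show "inj_on (Psi_triple A u) (covered_triples n B)"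
    and "W.independent (Psi_triple A u ` covered_triples n B)"
    using W.independent_image_if_coeffs_vanish[OF finite_covered_triples] by blast+
qed

end

theorem proposition2p8:
  fixes scaleU :: "'f::field \<Rightarrow> 'u::ab_group_add \<Rightarrow> 'u"
    and scaleV :: "'f \<Rightarrow> 'v::ab_group_add \<Rightarrow> 'v"
    and A :: "'u \<Rightarrow> 'u \<Rightarrow> 'v"
    and u :: "nat \<Rightarrow> 'u"
    and n m r t :: nat
  assumes vsU: "vector_space scaleU"
    and vsV: "vector_space scaleV"
    and basis_inj: "inj_on u {1..n}"
    and basis_indep: "\<not> module.dependent scaleU (u ` {1..n})"
    and basis_span: "module.span scaleU (u ` {1..n}) = UNIV"
    and dimV: "vector_space.dim scaleV (UNIV :: 'v set) = m"
    and bilin1: "\<And>x. Vector_Spaces.linear scaleU scaleV (A x)"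
    and bilin2: "\<And>y. Vector_Spaces.linear scaleU scaleV (\<lambda>x. A x y)"
    and alt: "\<And>x. A x x = 0"
    and im_span: "module.span scaleV {A x y | x y. True} = UNIV"
    and rt: "int (n choose 2) - int m = int (r choose 2) + int t"
    and tr: "t < r"
  shows "(\<exists>S \<subseteq> Wset A u n (Bseq scaleV A u n m).
            finite S \<and> \<not> module.dependent (scaleVU scaleV) S \<and>
            int (card S) \<ge> int (n choose 3) - int (r choose 3) - int (t choose 2))
       \<and> int (vector_space.dim (scaleVU scaleV) (ImPsi scaleV A u n))
            \<ge> int (n choose 3) - int (r choose 3) - int (t choose 2)"
proof -
  interpret alternating_bilinear scaleU scaleV A
    unfolding alternating_bilinear_def alternating_bilinear_axioms_def
    using vsU vsV bilin1 bilin2 alt by blast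
  define B where "B = Bseq scaleV A u n m"
  have "B \<subseteq> Ypairs n" unfolding B_def by (rule Bseq_subset_Ypairs)
  have "card B = m"
    using V.card_Bseq[of A u n m] span_Aval_Ypairs[OF basis_span] im_span dimV by (simp add: B_def)
  with \<open>B \<subseteq> Ypairs n\<close> rt have "card (Ypairs n - B) = (r choose 2) + t"
    by (simp add: card_Diff_subset finite_subset[OF _ finite_Ypairs] card_Ypairs)
  then have "card (triangles (Ypairs n - B)) \<le> (r choose 3) + (t choose 2)"
    using finite_Ypairs tr by (intro card_triangles_le) (auto simp: Ypairs_def)
  with binomial_3_le_covered_triples_triangles[OF \<open>B \<subseteq> Ypairs n\<close>]
  have bound: "int (n choose 3) - int (r choose 3) - int (t choose 2) \<le> int (card (covered_triples n B))"
    by linarith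
  define S where "S = Psi_triple A u ` covered_triples n B"
  have "card S = card (covered_triples n B)" and indep: "W.independent S"
    using Psi_covered_triples_independent[OF \<open>B \<subseteq> Ypairs n\<close> V.Bseq_pivot] unfolding S_def B_def
    by (auto simp: card_image)
  moreover have SW: "S \<subseteq> Wset A u n (Bseq scaleV A u n m)"
    by (simp add: S_def B_def Wset_eq_image_covered_triples)
  moreover have "card S \<le> W.dim (ImPsi scaleV A u n)"
    using SW Wset_subset_ImPsi indep by (meson independent_card_le_dim_ImPsi order_trans)
  ultimately show ?thesis
    using bound finite_covered_triples unfolding S_def by auto
qed

end
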